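(* For every integer $q'\ge2$, the network $\mathcal{N}_2$ (with parameter $q'$) has no scalar linear network coding (1-dimensional VLNC) solution over any finite field.
   Context: Vector linear network coding: each source $v$ generates $x_v\in F^d$; an edge out of a source $v$ carries $Ax_v$ for a $d\times d$ matrix $A$ over $F$; an edge out of an intermediate node carries $\sum A_{e',e}y_{e'}$ over the edges $e'$ entering that node; a terminal computes vectors $\sum B_ey_e$ over its incoming edges; a $d$-dimensional VLNC solution over $F$ is such a code with which every terminal computes each demanded message for all message choices. The Char-$q$-$s$ network (integer $q\ge2$): sources $s,x_1,\dots,x_{q+2}$; intermediate nodes $m_1,\dots,m_{q+3},n_1,\dots,n_{q+3}$; terminals $r_1,\dots,r_{q+3}$; edges: $(x_1,m_i)$ for $1\le i\le q+1$; $(s,m_1)$ and $(s,m_i)$ for $4\le i\le q+3$; $(x_i,m_j)$ for $2\le i,j\le q+2$, $i\ne j$; $(x_i,m_{q+3})$ for $1\le i\le q+2$; $e_i=(m_i,n_i)$ for $1\le i\le q+3$; $(n_i,r_i)$ for $1\le i\le q+2$; $(n_{q+3},r_i)$ and $(n_i,r_{q+3})$ for $1\le i\le q+2$; $(x_i,r_1)$ for $2\le i\le q+1$; $(x_1,r_{q+2})$; $(s,r_2)$; $(s,r_3)$. Demands: $r_1$ demands $x_{q+2}$; $r_i$ demands $x_i$ for $2\le i\le q+2$; $r_{q+3}$ demands $x_1$; no terminal demands $s$. The generalized M-network $\mathcal{M}_3$: sources in three groups $G_1=(\bar a,\bar b,\bar c)$, $G_2=(\bar r,\bar s,\bar w)$,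 $G_3=(\bar x,\bar y,\bar z)$; intermediate nodes $\bar u_1,\bar u_2,\bar u_3,\bar v_1,\dots,\bar v_5$; edges from each source of $G_i$ to $\bar u_i$, edges $(\bar u_i,\bar v_i),(\bar u_i,\bar v_4),(\bar u_i,\bar v_5)$ for $i=1,2,3$, and $(\bar v_i,\bar t_j)$ for $1\le i\le5$, $1\le j\le27$; terminals $\bar t_1,\dots,\bar t_{27}$, where $\bar t_j$ demands the $j$-th triple in the lexicographic order of $G_1\times G_2\times G_3$ (e.g. $\bar t_1$: $\bar a,\bar r,\bar x$; $\bar t_2$: $\bar a,\bar r,\bar y$; $\bar t_4$: $\bar a,\bar s,\bar x$; $\bar t_{25}$: $\bar c,\bar w,\bar x$; $\bar t_{27}$: $\bar c,\bar w,\bar z$). The network $\mathcal{N}_2$ (integer $q'\ge2$) is obtained from the disjoint union of $\mathcal{M}_3$ and a copy of the Char-$q'$-$s$ network (nodes renamed $\bar m_i,\bar n_i$, terminals $\rho_i$, edges $\bar e_i=(\bar m_i,\bar n_i)$, sources $x_i$ renamed $\bar x_i$ for $2\le i\le q'+2$) by identifying $x_1$ with $\bar a$ and $s$ with $\bar x$ (so $\rho_{q'+3}$ demands $\bar a$), and adding the edges: $(\bar w,\bar t_j)$ for $j\in\{7,8,9,16,17,18\}$; $(\bar c,\bar t_j)$ for $19\le j\le24$; $(\bar a,\bar t_{25})$; $(\bar y,\bar t_{26})$; $(\bar n_1,\bar t_{25})$. All other demands are unchanged. *)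

theory Defs
  imports "HOL-Analysis.Finite_Cartesian_Product"
begin

text \<open>A network is given by a set of source nodes, a set of (directed) edges, which are
pairs of nodes, and a demand function assigning to each node the set of sources it demands
(empty for non-terminals).  Messages are vectors in F^d, represented as 'f^'d with d = CARD('d);
coding matrices are d x d matrices 'f^'d^'d.
A code consists of:
 Asrc e      : matrix on an edge e leaving a source, carrying Asrc e *v x (tail e);
 Aint e' e   : local coefficient matrix from incoming edge e' to outgoing edge e at a
               non-source node;
 B t v e     : decoding matrix used by terminal t on its incoming edge e for demanded source v.\<close>

definition vlnc_equations ::
  "'v set \<Rightarrow> ('v \<times> 'v) set \<Rightarrow> (('v \<times> 'v) \<Rightarrow> 'f::semiring_1^'d^'d)
   \<Rightarrow> (('v \<times> 'v) \<Rightarrow> ('v \<times> 'v) \<Rightarrow> 'f^'d^'d) \<Rightarrow> ('v \<Rightarrow> 'f^'d) \<Rightarrow> (('v \<times> 'v) \<Rightarrow> 'f^'d) \<Rightarrow> bool"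
  where
  "vlnc_equations S E Asrc Aint x y \<longleftrightarrow>
     (\<forall>e\<in>E. fst e \<in> S \<longrightarrow> y e = Asrc e *v x (fst e)) \<and>
     (\<forall>e\<in>E. fst e \<notin> S \<longrightarrow>
        y e = (\<Sum>e'\<in>{e'\<in>E. snd e' = fst e}. Aint e' e *v y e'))"

definition vlnc_solution ::
  "'v set \<Rightarrow> ('v \<times> 'v) set \<Rightarrow> ('v \<Rightarrow> 'v set) \<Rightarrow> (('v \<times> 'v) \<Rightarrow> 'f::semiring_1^'d^'d)
   \<Rightarrow> (('v \<times> 'v) \<Rightarrow> ('v \<times> 'v) \<Rightarrow> 'f^'d^'d) \<Rightarrow> ('v \<Rightarrow> 'v \<Rightarrow> ('v \<times> 'v) \<Rightarrow> 'f^'d^'d) \<Rightarrow> bool"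
  where
  "vlnc_solution S E dem Asrc Aint B \<longleftrightarrow>
     (\<forall>x y. vlnc_equations S E Asrc Aint x y \<longrightarrow>
        (\<forall>t. \<forall>v\<in>dem t. (\<Sum>e\<in>{e\<in>E. snd e = t}. B t v e *v y e) = x v))"

definition vlnc_solvable ::
  "'v set \<Rightarrow> ('v \<times> 'v) set \<Rightarrow> ('v \<Rightarrow> 'v set) \<Rightarrow> 'f::field itself \<Rightarrow> 'd::finite itself \<Rightarrow> bool"
  where
  "vlnc_solvable S E dem (_::'f itself) (_::'d itself) \<longleftrightarrow>
     (\<exists>(Asrc :: ('v \<times> 'v) \<Rightarrow> 'f^'d^'d) Aint B. vlnc_solution S E dem Asrc Aint B)"

text \<open>G1 = (a,b,c) = Ga 1, Ga 2, Ga 3; G2 = (r,s,w) = Gb 1..3; G3 = (x,y,z) = Gc 1..3;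
U i = u_i, V i = v_i, T j = t_j.  Char-q'-s copy: Xb i = x_i (2 <= i <= q'+2), Mb i, Nb i,
Rho i.  The identifications x_1 = a and s = x (bar) are built in: x_1 is Ga 1, s is Gc 1.\<close>

datatype node = Ga nat | Gb nat | Gc nat | U nat | V nat | T nat
  | Xb nat | Mb nat | Nb nat | Rho nat

definition grp :: "nat \<Rightarrow> nat \<Rightarrow> node" where
  "grp i j = (if i = 1 then Ga j else if i = 2 then Gb j else Gc j)"

definition cx :: "nat \<Rightarrow> node" where
  "cx i = (if i = 1 then Ga 1 else Xb i)"

abbreviation cs :: node where "cs \<equiv> Gc 1"

definition N2_sources :: "nat \<Rightarrow> node set" where
  "N2_sources q = {grp i j | i j. i \<in> {1,2,3} \<and> j \<in> {1,2,3}} \<union> {Xb i | i. 2 \<le> i \<and> i \<le> q + 2}"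

definition char_edges :: "nat \<Rightarrow> (node \<times> node) set" where
  "char_edges q =
     {(cx 1, Mb i) | i. 1 \<le> i \<and> i \<le> q + 1}
   \<union> {(cs, Mb 1)} \<union> {(cs, Mb i) | i. 4 \<le> i \<and> i \<le> q + 3}
   \<union> {(cx i, Mb j) | i j. 2 \<le> i \<and> i \<le> q + 2 \<and> 2 \<le> j \<and> j \<le> q + 2 \<and> i \<noteq> j}
   \<union> {(cx i, Mb (q + 3)) | i. 1 \<le> i \<and> i \<le> q + 2}
   \<union> {(Mb i, Nb i) | i. 1 \<le> i \<and> i \<le> q + 3}
   \<union> {(Nb i, Rho i) | i. 1 \<le> i \<and> i \<le> q + 2}
   \<union> {(Nb (q + 3), Rho i) | i. 1 \<le> i \<and> i \<le> q + 2}
   \<union> {(Nb i, Rho (q + 3)) | i. 1 \<le> i \<and> i \<le> q + 2}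
   \<union> {(cx i, Rho 1) | i. 2 \<le> i \<and> i \<le> q + 1}
   \<union> {(cx 1, Rho (q + 2))}
   \<union> {(cs, Rho 2), (cs, Rho 3)}"

definition M3_edges :: "(node \<times> node) set" where
  "M3_edges =
     {(grp i j, U i) | i j. i \<in> {1,2,3} \<and> j \<in> {1,2,3}}
   \<union> {(U i, V i) | i. i \<in> {1,2,3}} \<union> {(U i, V 4) | i. i \<in> {1,2,3}}
   \<union> {(U i, V 5) | i. i \<in> {1,2,3}}
   \<union> {(V i, T j) | i j. 1 \<le> i \<and> i \<le> 5 \<and> 1 \<le> j \<and> j \<le> 27}"

definition extra_edges :: "(node \<times> node) set" where
  "extra_edges =
     {(Gb 3, T j) | j. j \<in> {7,8,9,16,17,18}}
   \<union> {(Ga 3, T j) | j. 19 \<le> j \<and> j \<le> 24}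
   \<union> {(Ga 1, T 25), (Gc 2, T 26), (Nb 1, T 25)}"

definition N2_edges :: "nat \<Rightarrow> (node \<times> node) set" where
  "N2_edges q = M3_edges \<union> char_edges q \<union> extra_edges"

text \<open>Demands.  T j (1 <= j <= 27) demands the j-th triple of G1 x G2 x G3 in lexicographic
order; Rho 1 demands x_{q'+2}; Rho i demands x_i (2 <= i <= q'+2); Rho (q'+3) demands x_1 = a.\<close>
definition N2_demands :: "nat \<Rightarrow> node \<Rightarrow> node set" where
  "N2_demands q v = (case v of
      T j \<Rightarrow> (if 1 \<le> j \<and> j \<le> 27
              then {Ga ((j - 1) div 9 + 1), Gb ((j - 1) div 3 mod 3 + 1), Gc ((j - 1) mod 3 + 1)}
              else {})
    | Rho i \<Rightarrow> (if i = 1 then {cx (q + 2)}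
                else if 2 \<le> i \<and> i \<le> q + 2 then {cx i}
                else if i = q + 3 then {cx 1}
                else {})
    | _ \<Rightarrow> {})"

end

theory Submission
  imports Defs
begin

text \<open>Only the M-network part matters, and only its terminals t_1, t_2, t_5, t_6, t_10,
t_11, t_14, t_15, which see nothing but the edges out of v_1, ..., v_5.  In a scalar code the
edge (u_i, v_i) carries one field element, so it can determine at most one message of G_i.
If a terminal demanding (p_1, p_2, p_3) had none of them determined on its group edge, one could
vary the three demands independently while keeping the signals on (u_i, v_i) zero; the terminal
would then have to recover three free coordinates from the two scalars on v_4 and v_5, which
counting forbids.  So each of the eight terminals has a demand determined on its group edge,
and the demand patterns of these terminals are incompatible with "at most one per group".\<close>

lemma card_field_ge_2: "2 \<le> CARD('f::{field,finite})"
proof -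
  have "card {0::'f, 1} = 2" by simp
  moreover have "card {0::'f, 1} \<le> CARD('f)" by (rule card_mono) auto
  ultimately show ?thesis by simp
qed

lemma not_inj_if_card_less:
  assumes "CARD('b) < CARD('a)"
  shows "\<not> inj (f :: 'a::finite \<Rightarrow> 'b::finite)"
  using card_inj_on_le[of f UNIV UNIV] assms by auto

lemma solution_decodes_equal:
  assumes sol: "vlnc_solution S E dem Asrc Aint B"
    and eqs: "vlnc_equations S E Asrc Aint x y" "vlnc_equations S E Asrc Aint x' y'"
    and same: "\<And>e. e \<in> E \<Longrightarrow> snd e = t \<Longrightarrow> y e = y' e"
    and v: "v \<in> dem t"
  shows "x v = x' v"
proof -
  have "x v = (\<Sum>e\<in>{e\<in>E. snd e = t}. B t v e *v y e)"
    using sol eqs(1) v unfolding vlnc_solution_def by simp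
  also have "\<dots> = (\<Sum>e\<in>{e\<in>E. snd e = t}. B t v e *v y' e)"
    using same by (intro sum.cong) auto
  also have "\<dots> = x' v"
    using sol eqs(2) v unfolding vlnc_solution_def by simp
  finally show ?thesis .
qed

lemma N2_sources_eq:
  "N2_sources q = {Ga 1, Ga 2, Ga 3, Gb 1, Gb 2, Gb 3, Gc 1, Gc 2, Gc 3} \<union> {Xb i | i. 2 \<le> i \<and> i \<le> q + 2}"
proof -
  have "{grp i j |i j. i \<in> {1,2,3} \<and> j \<in> {1,2,3}}
      = {grp 1 1, grp 1 2, grp 1 3, grp 2 1, grp 2 2, grp 2 3, grp 3 1, grp 3 2, grp 3 3}"
    by blast
  then show ?thesis by (simp add: N2_sources_def grp_def)
qed

lemma N2_sources_iff [simp]: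
  "Ga j \<in> N2_sources q \<longleftrightarrow> j \<in> {1,2,3}"
  "Gb j \<in> N2_sources q \<longleftrightarrow> j \<in> {1,2,3}"
  "Gc j \<in> N2_sources q \<longleftrightarrow> j \<in> {1,2,3}"
  "Xb j \<in> N2_sources q \<longleftrightarrow> 2 \<le> j \<and> j \<le> q + 2"
  "U j \<notin> N2_sources q" "V j \<notin> N2_sources q" "T j \<notin> N2_sources q"
  "Mb j \<notin> N2_sources q" "Nb j \<notin> N2_sources q" "Rho j \<notin> N2_sources q"
  unfolding N2_sources_eq by auto

lemma grp_in_N2_sources: "i \<in> {1,2,3} \<Longrightarrow> j \<in> {1,2,3} \<Longrightarrow> grp i j \<in> N2_sources q"
  by (auto simp: grp_def)

lemma grp_eq_imp_eq: "i \<in> {1,2,3} \<Longrightarrow> i' \<in> {1,2,3} \<Longrightarrow> grp i j = grp i' k \<Longrightarrow> i = i'"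
  by (auto simp: grp_def split: if_splits)

lemma N2_edge_tail_cases:
  "e \<in> N2_edges q \<Longrightarrow>
     fst e \<in> N2_sources q \<or> (\<exists>i. fst e = U i \<or> fst e = V i \<or> fst e = Mb i \<or> fst e = Nb i)"
  unfolding N2_edges_def M3_edges_def char_edges_def extra_edges_def
  by (auto simp: grp_def cx_def split: if_splits)

lemma N2_edge_into_U:
  "e \<in> N2_edges q \<Longrightarrow> snd e = U i \<Longrightarrow> i \<in> {1,2,3} \<and> (\<exists>j\<in>{1,2,3}. fst e = grp i j)"
  unfolding N2_edges_def M3_edges_def char_edges_def extra_edges_def
  by (auto simp: grp_def cx_def)

lemma N2_edge_into_Mb: "e \<in> N2_edges q \<Longrightarrow> snd e = Mb i \<Longrightarrow> fst e \<in> N2_sources q"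
  unfolding N2_edges_def M3_edges_def char_edges_def extra_edges_def
  by (auto simp: grp_def cx_def split: if_splits)

lemma N2_edge_into_V: "e \<in> N2_edges q \<Longrightarrow> snd e = V i \<Longrightarrow> \<exists>k. fst e = U k \<and> (i \<le> 3 \<longrightarrow> k = i)"
  unfolding N2_edges_def M3_edges_def char_edges_def extra_edges_def
  by (auto simp: grp_def cx_def split: if_splits)

lemma N2_edge_into_Nb: "e \<in> N2_edges q \<Longrightarrow> snd e = Nb i \<Longrightarrow> \<exists>k. fst e = Mb k"
  unfolding N2_edges_def M3_edges_def char_edges_def extra_edges_def
  by (auto simp: grp_def cx_def split: if_splits)

lemma N2_edge_into_T:
  "e \<in> N2_edges q \<Longrightarrow> snd e = T j \<Longrightarrow> j \<in> {1,2,5,6,10,11,14,15} \<Longrightarrow>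
     \<exists>i\<in>{1,2,3,4,5}. e = (V i, T j)"
  unfolding N2_edges_def M3_edges_def char_edges_def extra_edges_def
  by (auto simp: grp_def cx_def split: if_splits)

lemma N2_demands_T:
  "N2_demands q (T 1) = {Ga 1, Gb 1, Gc 1}"
  "N2_demands q (T 2) = {Ga 1, Gb 1, Gc 2}"
  "N2_demands q (T 5) = {Ga 1, Gb 2, Gc 2}"
  "N2_demands q (T 6) = {Ga 1, Gb 2, Gc 3}"
  "N2_demands q (T 10) = {Ga 2, Gb 1, Gc 1}"
  "N2_demands q (T 11) = {Ga 2, Gb 1, Gc 2}"
  "N2_demands q (T 14) = {Ga 2, Gb 2, Gc 2}"
  "N2_demands q (T 15) = {Ga 2, Gb 2, Gc 3}"
  by (simp_all add: N2_demands_def) (simp_all add: numeral_2_eq_2)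

definition source_signal ::
  "(('v \<times> 'v) \<Rightarrow> 'f::semiring_1^'d^'d) \<Rightarrow> ('v \<Rightarrow> 'f^'d) \<Rightarrow> 'v \<times> 'v \<Rightarrow> 'f^'d"
  where "source_signal Asrc x e = Asrc e *v x (fst e)"

definition relay ::
  "('v \<times> 'v) set \<Rightarrow> (('v \<times> 'v) \<Rightarrow> ('v \<times> 'v) \<Rightarrow> 'f::semiring_1^'d^'d)
   \<Rightarrow> (('v \<times> 'v) \<Rightarrow> 'f^'d) \<Rightarrow> 'v \<times> 'v \<Rightarrow> 'f^'d"
  where "relay E Aint y e = (\<Sum>e'\<in>{e'\<in>E. snd e' = fst e}. Aint e' e *v y e')"

lemma source_signal_add:
  "source_signal Asrc (\<lambda>n. x n + z n) = (\<lambda>e. source_signal Asrc x e + source_signal Asrc z e)"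
  by (simp add: fun_eq_iff source_signal_def matrix_vector_right_distrib)

lemma source_signal_scale:
  fixes Asrc :: "('v \<times> 'v) \<Rightarrow> 'f::field^'d^'d"
  shows "source_signal Asrc (\<lambda>n. c *s x n) = (\<lambda>e. c *s source_signal Asrc x e)"
  by (simp add: fun_eq_iff source_signal_def vector_scalar_commute)

lemma relay_add: "relay E Aint (\<lambda>e. y e + z e) = (\<lambda>e. relay E Aint y e + relay E Aint z e)"
  by (simp add: fun_eq_iff relay_def matrix_vector_right_distrib sum.distrib)

lemma relay_scale:
  fixes Aint :: "('v \<times> 'v) \<Rightarrow> ('v \<times> 'v) \<Rightarrow> 'f::field^'d^'d"
  shows "relay E Aint (\<lambda>e. c *s y e) = (\<lambda>e. c *s relay E Aint y e)"
  by (simp add: fun_eq_iff relay_def vector_scalar_commute sum_cmul)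

text \<open>The network has depth two: the nodes U i and Mb i are fed by sources only, the nodes
V i and Nb i by these only.  So two relay steps from the sources give signals satisfying all
edge equations.\<close>

fun fed_by_sources :: "node \<Rightarrow> bool" where
  "fed_by_sources (U _) = True"
| "fed_by_sources (Mb _) = True"
| "fed_by_sources _ = False"

definition N2_signal ::
  "nat \<Rightarrow> (node \<times> node \<Rightarrow> 'f::field^'d^'d) \<Rightarrow> (node \<times> node \<Rightarrow> node \<times> node \<Rightarrow> 'f^'d^'d)
   \<Rightarrow> (node \<Rightarrow> 'f^'d) \<Rightarrow> node \<times> node \<Rightarrow> 'f^'d"
  where "N2_signal q Asrc Aint x e =
    (if fst e \<in> N2_sources q then source_signal Asrc x e
     else if fed_by_sources (fst e) then relay (N2_edges q) Aint (source_signal Asrc x) e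
     else relay (N2_edges q) Aint (relay (N2_edges q) Aint (source_signal Asrc x)) e)"

lemma N2_signal_add:
  "N2_signal q Asrc Aint (\<lambda>n. x n + z n) e = N2_signal q Asrc Aint x e + N2_signal q Asrc Aint z e"
  by (simp add: N2_signal_def source_signal_add relay_add)

lemma N2_signal_scale:
  "N2_signal q Asrc Aint (\<lambda>n. c *s x n) e = c *s N2_signal q Asrc Aint x e"
  by (simp add: N2_signal_def source_signal_scale relay_scale)

lemma N2_signal_solves: "vlnc_equations (N2_sources q) (N2_edges q) Asrc Aint x (N2_signal q Asrc Aint x)"
  unfolding vlnc_equations_def
proof (intro conjI ballI impI)
  fix e assume "e \<in> N2_edges q" "fst e \<in> N2_sources q"
  then show "N2_signal q Asrc Aint x e = Asrc e *v x (fst e)"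
    by (simp add: N2_signal_def source_signal_def)
next
  fix e assume e: "e \<in> N2_edges q" "fst e \<notin> N2_sources q"
  let ?In = "{e'\<in>N2_edges q. snd e' = fst e}"
  show "N2_signal q Asrc Aint x e = (\<Sum>e'\<in>?In. Aint e' e *v N2_signal q Asrc Aint x e')"
  proof (cases "fed_by_sources (fst e)")
    case True
    have "N2_signal q Asrc Aint x e' = source_signal Asrc x e'" if "e' \<in> ?In" for e'
    proof -
      from True obtain i where "fst e = U i \<or> fst e = Mb i" by (cases "fst e") auto
      with that show ?thesis
        using N2_edge_into_U[of e' q i] N2_edge_into_Mb[of e' q i] grp_in_N2_sources
        by (auto simp: N2_signal_def)
    qed
    with True e(2) show ?thesis by (simp add: N2_signal_def relay_def)
  next
    case False
    obtain i where i: "fst e = V i \<or> fst e = Nb i"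
      using N2_edge_tail_cases[OF e(1)] e(2) False by auto
    have "N2_signal q Asrc Aint x e' = relay (N2_edges q) Aint (source_signal Asrc x) e'"
      if "e' \<in> ?In" for e'
    proof -
      from that i obtain k where "fst e' = U k \<or> fst e' = Mb k"
        using N2_edge_into_V[of e' q i] N2_edge_into_Nb[of e' q i] by auto
      then show ?thesis by (auto simp: N2_signal_def)
    qed
    with False e(2) show ?thesis by (simp add: N2_signal_def relay_def)
  qed
qed

definition group :: "nat \<Rightarrow> node set" where "group i = {grp i 1, grp i 2, grp i 3}"

lemma group_simps [simp]:
  "group 1 = {Ga 1, Ga 2, Ga 3}" "group (Suc 0) = {Ga 1, Ga 2, Ga 3}"
  "group 2 = {Gb 1, Gb 2, Gb 3}" "group 3 = {Gc 1, Gc 2, Gc 3}"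
  by (simp_all add: group_def grp_def)

definition supported_on_group :: "nat \<Rightarrow> (node \<Rightarrow> 'f::zero^'d) \<Rightarrow> bool" where
  "supported_on_group i x \<longleftrightarrow> (\<forall>n. n \<notin> group i \<longrightarrow> x n = 0)"

text \<open>By linearity of the code, this says that, for messages supported on G_i, the value of
message p is a function of the signal on (U i, V i).\<close>

definition determined_on_group_edge ::
  "nat \<Rightarrow> (node \<times> node \<Rightarrow> 'f::field^'d^'d) \<Rightarrow> (node \<times> node \<Rightarrow> node \<times> node \<Rightarrow> 'f^'d^'d)
   \<Rightarrow> nat \<Rightarrow> node \<Rightarrow> bool" where
  "determined_on_group_edge q Asrc Aint i p \<longleftrightarrow>
     (\<forall>x. supported_on_group i x \<longrightarrow> N2_signal q Asrc Aint x (U i, V i) = 0 \<longrightarrow> x p = 0)"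

lemma N2_signal_group_edge_other_group:
  assumes "i \<in> {1,2,3}" "i' \<in> {1,2,3}" "i' \<noteq> i" "supported_on_group i' x"
  shows "N2_signal q Asrc Aint x (U i, V i) = 0"
proof -
  have "x (fst e') = 0" if "e' \<in> N2_edges q" "snd e' = U i" for e'
  proof -
    from N2_edge_into_U[OF that] obtain j where j: "fst e' = grp i j" by blast
    have "fst e' \<notin> group i'"
      using j grp_eq_imp_eq[OF assms(1,2)] assms(3) unfolding group_def by auto
    with assms(4) show ?thesis unfolding supported_on_group_def by blast
  qed
  then show ?thesis by (simp add: N2_signal_def relay_def source_signal_def)
qed

lemma N2_signal_V_eq_0:
  assumes "k \<in> {1,2,3}" "N2_signal q Asrc Aint x (U k, V k) = 0"
  shows "N2_signal q Asrc Aint x (V k, t) = 0"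
proof -
  have "relay (N2_edges q) Aint (source_signal Asrc x) e' = 0"
    if "e' \<in> N2_edges q" "snd e' = V k" for e'
  proof -
    have "e' = (U k, V k)" using N2_edge_into_V[OF that] assms(1) that(2) by (cases e') auto
    with assms(2) show ?thesis by (simp add: N2_signal_def)
  qed
  then show ?thesis by (simp add: N2_signal_def relay_def)
qed

lemma determined_on_group_edge_unique:
  fixes Asrc :: "node \<times> node \<Rightarrow> 'f::{field,finite}^1^1"
  assumes p: "p \<in> group i" "p' \<in> group i" "p \<noteq> p'"
    and det: "determined_on_group_edge q Asrc Aint i p" "determined_on_group_edge q Asrc Aint i p'"
  shows False
proof -
  define P where "P n = (if n = p then vec 1 else 0 :: 'f^1)" for n
  define P' where "P' n = (if n = p' then vec 1 else 0 :: 'f^1)" for n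
  define X where "X l n = fst l *s P n + snd l *s P' n" for l :: "'f \<times> 'f" and n
  let ?\<Phi> = "\<lambda>l. N2_signal q Asrc Aint (X l) (U i, V i)"
  obtain l l' where ll: "l \<noteq> l'" "?\<Phi> l = ?\<Phi> l'"
    using not_inj_if_card_less[of ?\<Phi>] card_field_ge_2[where 'f='f] unfolding inj_def by auto
  define Z where "Z = X (fst l - fst l', snd l - snd l')"
  have "N2_signal q Asrc Aint Z (U i, V i) = ?\<Phi> l - ?\<Phi> l'"
    unfolding Z_def X_def N2_signal_add N2_signal_scale by (simp add: vector_sub_rdistrib algebra_simps)
  with ll(2) have "N2_signal q Asrc Aint Z (U i, V i) = 0" by simp
  moreover have "supported_on_group i Z"
    using p unfolding supported_on_group_def Z_def X_def P_def P'_def by auto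
  ultimately have "Z p = 0" "Z p' = 0"
    using det unfolding determined_on_group_edge_def by blast+
  then have "fst l = fst l'" "snd l = snd l'"
    using p(3) by (simp_all add: Z_def X_def P_def P'_def vec_eq_iff)
  with ll(1) show False by (simp add: prod_eq_iff)
qed

lemma some_demand_determined_on_group_edge:
  fixes Asrc :: "node \<times> node \<Rightarrow> 'f::{field,finite}^1^1"
  assumes sol: "vlnc_solution (N2_sources q) (N2_edges q) (N2_demands q) Asrc Aint B"
    and j: "j \<in> {1,2,5,6,10,11,14,15}" and dem: "N2_demands q (T j) = {p1, p2, p3}"
    and g: "p1 \<in> group 1" "p2 \<in> group 2" "p3 \<in> group 3"
  shows "determined_on_group_edge q Asrc Aint 1 p1 \<or> determined_on_group_edge q Asrc Aint 2 p2
    \<or> determined_on_group_edge q Asrc Aint 3 p3"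
proof (rule ccontr)
  let ?y = "N2_signal q Asrc Aint"
  assume "\<not> ?thesis"
  then obtain x1 x2 x3 :: "node \<Rightarrow> 'f^1" where
    x1: "supported_on_group 1 x1" "?y x1 (U 1, V 1) = 0" "x1 p1 \<noteq> 0" and
    x2: "supported_on_group 2 x2" "?y x2 (U 2, V 2) = 0" "x2 p2 \<noteq> 0" and
    x3: "supported_on_group 3 x3" "?y x3 (U 3, V 3) = 0" "x3 p3 \<noteq> 0"
    unfolding determined_on_group_edge_def by blast
  define X where "X l n = fst l *s x1 n + fst (snd l) *s x2 n + snd (snd l) *s x3 n"
    for l :: "'f \<times> 'f \<times> 'f" and n
  have group_edges_silent: "?y (X l) (U i, V i) = 0" if i: "i \<in> {1,2,3}" for l i
  proof -
    have "?y x1 (U i, V i) = 0" "?y x2 (U i, V i) = 0" "?y x3 (U i, V i) = 0"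
      using i x1 x2 x3 N2_signal_group_edge_other_group[of i] by fastforce+
    then show ?thesis unfolding X_def N2_signal_add N2_signal_scale by simp
  qed
  let ?\<Phi> = "\<lambda>l. (?y (X l) (V 4, T j), ?y (X l) (V 5, T j))"
  have "CARD('f) * CARD('f) * 1 < CARD('f) * CARD('f) * CARD('f)"
    using card_field_ge_2[where 'f='f] by (intro mult_strict_left_mono) auto
  then have "\<not> inj ?\<Phi>"
    by (intro not_inj_if_card_less) (simp add: mult.assoc)
  then obtain l l' where ll: "l \<noteq> l'" "?\<Phi> l = ?\<Phi> l'"
    unfolding inj_def by blast
  have same_inputs: "?y (X l) e = ?y (X l') e" if e: "e \<in> N2_edges q" "snd e = T j" for e
  proof -
    obtain k where k: "k \<in> {1,2,3,4,5}" "e = (V k, T j)" using N2_edge_into_T[OF e j] by blast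
    show ?thesis
    proof (cases "k \<in> {1,2,3}")
      case True
      then show ?thesis using k(2) N2_signal_V_eq_0[OF True group_edges_silent[OF True]] by simp
    next
      case False
      with k ll(2) show ?thesis by auto
    qed
  qed
  have X_eq: "X l v = X l' v" if "v \<in> {p1, p2, p3}" for v
    using solution_decodes_equal[OF sol N2_signal_solves N2_signal_solves same_inputs] that dem
    by blast
  have "x2 p1 = 0" "x3 p1 = 0" "x1 p2 = 0" "x3 p2 = 0" "x1 p3 = 0" "x2 p3 = 0"
    using g x1(1) x2(1) x3(1) unfolding supported_on_group_def by auto
  then have "fst l *s x1 p1 = fst l' *s x1 p1" "fst (snd l) *s x2 p2 = fst (snd l') *s x2 p2"
      "snd (snd l) *s x3 p3 = snd (snd l') *s x3 p3"
    using X_eq[of p1] X_eq[of p2] X_eq[of p3] by (simp_all add: X_def)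
  then have "fst l = fst l'" "fst (snd l) = fst (snd l')" "snd (snd l) = snd (snd l')"
    using x1(3) x2(3) x3(3) by simp_all
  with ll(1) show False by (simp add: prod_eq_iff)
qed

theorem lemma8:
  fixes q :: nat
  assumes "q \<ge> 2"
  shows "\<not> vlnc_solvable (N2_sources q) (N2_edges q) (N2_demands q)
            TYPE('f::{field,finite}) TYPE(1)"
proof
  assume "vlnc_solvable (N2_sources q) (N2_edges q) (N2_demands q) TYPE('f::{field,finite}) TYPE(1)"
  then obtain Asrc :: "node \<times> node \<Rightarrow> 'f^1^1" and Aint B where
    sol: "vlnc_solution (N2_sources q) (N2_edges q) (N2_demands q) Asrc Aint B"
    unfolding vlnc_solvable_def by blast
  let ?D = "determined_on_group_edge q Asrc Aint"
  have unique: "\<not> (?D i p \<and> ?D i p')" if "p \<in> group i" "p' \<in> group i" "p \<noteq> p'" for i p p'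
    using determined_on_group_edge_unique that by blast
  have "?D 1 (Ga 1) \<or> ?D 2 (Gb 1) \<or> ?D 3 (Gc 1)"
    by (rule some_demand_determined_on_group_edge[OF sol _ N2_demands_T(1)]) simp_all
  moreover have "?D 1 (Ga 1) \<or> ?D 2 (Gb 1) \<or> ?D 3 (Gc 2)"
    by (rule some_demand_determined_on_group_edge[OF sol _ N2_demands_T(2)]) simp_all
  moreover have "?D 1 (Ga 1) \<or> ?D 2 (Gb 2) \<or> ?D 3 (Gc 2)"
    by (rule some_demand_determined_on_group_edge[OF sol _ N2_demands_T(3)]) simp_all
  moreover have "?D 1 (Ga 1) \<or> ?D 2 (Gb 2) \<or> ?D 3 (Gc 3)"
    by (rule some_demand_determined_on_group_edge[OF sol _ N2_demands_T(4)]) simp_all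
  moreover have "?D 1 (Ga 2) \<or> ?D 2 (Gb 1) \<or> ?D 3 (Gc 1)"
    by (rule some_demand_determined_on_group_edge[OF sol _ N2_demands_T(5)]) simp_all
  moreover have "?D 1 (Ga 2) \<or> ?D 2 (Gb 1) \<or> ?D 3 (Gc 2)"
    by (rule some_demand_determined_on_group_edge[OF sol _ N2_demands_T(6)]) simp_all
  moreover have "?D 1 (Ga 2) \<or> ?D 2 (Gb 2) \<or> ?D 3 (Gc 2)"
    by (rule some_demand_determined_on_group_edge[OF sol _ N2_demands_T(7)]) simp_all
  moreover have "?D 1 (Ga 2) \<or> ?D 2 (Gb 2) \<or> ?D 3 (Gc 3)"
    by (rule some_demand_determined_on_group_edge[OF sol _ N2_demands_T(8)]) simp_all
  ultimately show False
    using unique[of "Ga 1" 1 "Ga 2"] unique[of "Gb 1" 2 "Gb 2"] unique[of "Gc 1" 3 "Gc 2"]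
      unique[of "Gc 2" 3 "Gc 3"] unique[of "Gc 1" 3 "Gc 3"]
    by auto
qed

end
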